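(* For every Tychonoff space $X$, the following are equivalent: (1) $C_p(X)\models S_1(\Gamma_f,\mathcal B_f)$ for every $f\in C(X)$; (2) $X\models S_1(\Gamma_F,\mathcal O)$.
   Context: All spaces are Tychonoff; $C_p(X)$ is $C(X)$ with pointwise convergence topology. For $f\in C(X)$: $\Gamma_f$ is the family of infinite $A\subseteq C(X)$ with $f\notin A$ such that every neighbourhood of $f$ contains all but finitely many elements of $A$; $\mathcal B_f$ is the family of sets $B\subseteq C(X)$ such that for every $x\in X$ and $\varepsilon>0$ there is $h\in B$ with $|h(x)-f(x)|<\varepsilon$. Zero-set: $g^{-1}(0)$, $g\in C(X)$; cozero-set: its complement. A cover $\mathcal U$ of $X$ always means $X=\bigcup\mathcal U$, $X\notin\mathcal U$; $\mathcal O$: family of open covers; $\gamma$-cover: infinite, each point in all but finitely many members. $\Gamma_F$: $\gamma$-covers $\mathcal U$ of $X$ by cozero-sets for which there are zero-sets $F(U)\subseteq U$ ($U\in\mathcal U$) with $\{F(U):U\in\mathcal U\}$ a $\gamma$-cover of $X$. $S_1(\mathcal P,\mathcal Q)$: for every sequence $(P_n)$ of elements of $\mathcal P$ there are $p_n\in P_n$ with $\{p_n:n\in\omega\}\in\mathcal Q$. *)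

theory Defs
  imports "HOL-Analysis.Analysis"
begin

definition tychonoff_space :: "'a topology \<Rightarrow> bool" where
  "tychonoff_space X \<longleftrightarrow> completely_regular_space X \<and> Hausdorff_space X"

text \<open>C(X): continuous real-valued functions on X, normalised to 0 outside the
  carrier so that each element of C(X) is represented exactly once.\<close>
definition Cfun :: "'a topology \<Rightarrow> ('a \<Rightarrow> real) set" where
  "Cfun X = {f. continuous_map X euclideanreal f \<and> (\<forall>x. x \<notin> topspace X \<longrightarrow> f x = 0)}"

definition Cp_nbhd :: "'a topology \<Rightarrow> ('a \<Rightarrow> real) \<Rightarrow> 'a set \<Rightarrow> real \<Rightarrow> ('a \<Rightarrow> real) set" where
  "Cp_nbhd X f F e = {g \<in> Cfun X. \<forall>x\<in>F. \<bar>g x - f x\<bar> < e}"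

definition Gamma_f :: "'a topology \<Rightarrow> ('a \<Rightarrow> real) \<Rightarrow> ('a \<Rightarrow> real) set set" where
  "Gamma_f X f = {A. A \<subseteq> Cfun X \<and> infinite A \<and> f \<notin> A \<and>
     (\<forall>F e. finite F \<and> F \<subseteq> topspace X \<and> e > 0 \<longrightarrow> finite (A - Cp_nbhd X f F e))}"

definition B_f :: "'a topology \<Rightarrow> ('a \<Rightarrow> real) \<Rightarrow> ('a \<Rightarrow> real) set set" where
  "B_f X f = {B. B \<subseteq> Cfun X \<and>
     (\<forall>x\<in>topspace X. \<forall>e>0. \<exists>h\<in>B. \<bar>h x - f x\<bar> < e)}"

definition zero_set :: "'a topology \<Rightarrow> 'a set \<Rightarrow> bool" where
  "zero_set X Z \<longleftrightarrow> (\<exists>g. continuous_map X euclideanreal g \<and> Z = {x \<in> topspace X. g x = 0})"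

definition cozero_set :: "'a topology \<Rightarrow> 'a set \<Rightarrow> bool" where
  "cozero_set X U \<longleftrightarrow> (\<exists>g. continuous_map X euclideanreal g \<and> U = {x \<in> topspace X. g x \<noteq> 0})"

definition is_cover :: "'a topology \<Rightarrow> 'a set set \<Rightarrow> bool" where
  "is_cover X \<U> \<longleftrightarrow> \<Union>\<U> = topspace X \<and> topspace X \<notin> \<U>"

definition open_covers :: "'a topology \<Rightarrow> 'a set set set" where
  "open_covers X = {\<U>. is_cover X \<U> \<and> (\<forall>U\<in>\<U>. openin X U)}"

definition gamma_cover :: "'a topology \<Rightarrow> 'a set set \<Rightarrow> bool" where
  "gamma_cover X \<U> \<longleftrightarrow> is_cover X \<U> \<and> infinite \<U> \<and>
     (\<forall>x\<in>topspace X. finite {U \<in> \<U>. x \<notin> U})"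

definition Gamma_F :: "'a topology \<Rightarrow> 'a set set set" where
  "Gamma_F X = {\<U>. gamma_cover X \<U> \<and> (\<forall>U\<in>\<U>. cozero_set X U) \<and>
     (\<exists>F. (\<forall>U\<in>\<U>. zero_set X (F U) \<and> F U \<subseteq> U) \<and> gamma_cover X (F ` \<U>))}"

definition S1 :: "'b set set \<Rightarrow> 'b set set \<Rightarrow> bool" where
  "S1 \<P> \<Q> \<longleftrightarrow> (\<forall>P :: nat \<Rightarrow> 'b set. (\<forall>n. P n \<in> \<P>) \<longrightarrow>
     (\<exists>p. (\<forall>n. p n \<in> P n) \<and> range p \<in> \<Q>))"

end

theory Submission
  imports Defs "HOL-Library.Nat_Bijection"
begin

text \<open>
  (2) \<Longrightarrow> (1): if \<open>A \<in> \<Gamma>\<^sub>f\<close> then, for a radius \<open>r > 0\<close>, the sets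
  \<open>{x. \<bar>h x - f x\<bar> < r}\<close> (\<open>h \<in> A\<close>) form a \<open>\<gamma>\<close>-cover by cozero-sets that shrinks to the
  \<open>\<gamma>\<close>-cover by the zero-sets \<open>{x. \<bar>h x - f x\<bar> \<le> r/2}\<close>, i.e.\ a member of \<open>\<Gamma>\<^sub>F\<close>
  (unless one of these sets is all of \<open>X\<close>, and then that \<open>h\<close> alone is \<open>r\<close>-close to \<open>f\<close>).
  Splitting the given sequence into countably many subsequences, one per radius \<open>1/(k+1)\<close>,
  and applying \<open>S\<^sub>1(\<Gamma>\<^sub>F, \<O>)\<close> to each of them yields selected functions that approximate
  \<open>f\<close> at every point to every precision.

  (1) \<Longrightarrow> (2): for \<open>\<U> \<in> \<Gamma>\<^sub>F\<close> with zero-sets \<open>F U \<subseteq> U\<close>, functions \<open>h\<^sub>U\<close> vanishing on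
  \<open>F U\<close> and equal to \<open>1\<close> exactly off \<open>U\<close> converge to \<open>0\<close>, and \<open>\<bar>h\<^sub>U x\<bar> < 1\<close> forces
  \<open>x \<in> U\<close>. So a selection approximating \<open>0\<close> at every point selects an open cover.
\<close>

lemma gamma_cover_image:
  assumes inf: "infinite A"
    and sub: "\<And>a. a \<in> A \<Longrightarrow> g a \<subseteq> topspace X"
    and not_top: "topspace X \<notin> g ` A"
    and cofin: "\<And>x. x \<in> topspace X \<Longrightarrow> finite {a\<in>A. x \<notin> g a}"
  shows "gamma_cover X (g ` A)"
proof -
  have covers: "topspace X \<subseteq> \<Union>(g ` A)"
  proof
    fix x assume x: "x \<in> topspace X"
    have "A \<noteq> {a\<in>A. x \<notin> g a}" using cofin[OF x] inf by force
    then show "x \<in> \<Union>(g ` A)" by blast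
  qed
  have fin: "finite {U \<in> g ` A. x \<notin> U}" if x: "x \<in> topspace X" for x
  proof -
    have "{U \<in> g ` A. x \<notin> U} = g ` {a\<in>A. x \<notin> g a}" by blast
    then show ?thesis using cofin[OF x] by simp
  qed
  have "infinite (g ` A)"
  proof
    assume "finite (g ` A)"
    moreover have "A = (\<Union>V\<in>g ` A. {a\<in>A. g a = V})" by blast
    ultimately obtain V where V: "V \<in> g ` A" "infinite {a\<in>A. g a = V}"
      using inf by (metis (no_types, lifting) finite_UN)
    have "topspace X \<subseteq> V"
    proof
      fix x assume x: "x \<in> topspace X"
      show "x \<in> V"
      proof (rule ccontr)
        assume "x \<notin> V"
        then have "{a\<in>A. g a = V} \<subseteq> {a\<in>A. x \<notin> g a}" by blast
        then show False using cofin[OF x] V(2) finite_subset by blast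
      qed
    qed
    moreover have "V \<subseteq> topspace X" using V(1) sub by blast
    ultimately have "V = topspace X" by blast
    with V(1) not_top show False by simp
  qed
  moreover have "\<Union>(g ` A) = topspace X" using covers sub by blast
  ultimately show ?thesis
    unfolding gamma_cover_def is_cover_def using not_top fin by blast
qed

lemma cozero_set_subset_topspace: "cozero_set X U \<Longrightarrow> U \<subseteq> topspace X"
  unfolding cozero_set_def by auto

lemma openin_cozero_set:
  assumes "cozero_set X U"
  shows "openin X U"
proof -
  obtain g where g: "continuous_map X euclideanreal g" "U = {x \<in> topspace X. g x \<in> -{0}}"
    using assms unfolding cozero_set_def by auto
  show ?thesis unfolding g(2) by (rule openin_continuous_map_preimage[OF g(1)]) auto
qed

lemma cozero_set_sublevel:
  assumes "continuous_map X euclideanreal g"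
  shows "cozero_set X {x \<in> topspace X. g x < c}"
proof -
  have "continuous_map X euclideanreal (\<lambda>x. max 0 (c - g x))"
    using assms by (intro continuous_map_real_max continuous_map_diff) auto
  moreover have "{x \<in> topspace X. g x < c} = {x \<in> topspace X. max 0 (c - g x) \<noteq> 0}"
    by auto
  ultimately show ?thesis unfolding cozero_set_def by blast
qed

lemma zero_set_sublevel:
  assumes "continuous_map X euclideanreal g"
  shows "zero_set X {x \<in> topspace X. g x \<le> c}"
proof -
  have "continuous_map X euclideanreal (\<lambda>x. max 0 (g x - c))"
    using assms by (intro continuous_map_real_max continuous_map_diff) auto
  moreover have "{x \<in> topspace X. g x \<le> c} = {x \<in> topspace X. max 0 (g x - c) = 0}"
    by (auto simp: max_def)
  ultimately show ?thesis unfolding zero_set_def by blast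
qed

lemma Gamma_F_imageI:
  assumes inf: "infinite A"
    and coz: "\<And>a. a \<in> A \<Longrightarrow> cozero_set X (U a)"
    and zer: "\<And>a. a \<in> A \<Longrightarrow> zero_set X (Z a)"
    and ZU: "\<And>a. a \<in> A \<Longrightarrow> Z a \<subseteq> U a"
    and not_top: "topspace X \<notin> U ` A"
    and cofin: "\<And>x. x \<in> topspace X \<Longrightarrow> finite {a\<in>A. x \<notin> Z a}"
  shows "U ` A \<in> Gamma_F X"
proof -
  have U_sub: "U a \<subseteq> topspace X" if "a \<in> A" for a
    using coz[OF that] by (rule cozero_set_subset_topspace)
  have gamma_U: "gamma_cover X (U ` A)"
  proof (rule gamma_cover_image[OF inf U_sub not_top])
    show "finite {a\<in>A. x \<notin> U a}" if "x \<in> topspace X" for x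
      using cofin[OF that] by (rule rev_finite_subset) (use ZU in blast)
  qed
  \<comment> \<open>\<open>F\<close> must depend on the member \<open>U a\<close>, not on the index \<open>a\<close>: use one index per member.\<close>
  obtain B where B: "B \<subseteq> A" "inj_on U B" "U ` B = U ` A"
    using subset_image_inj[of "U ` A" U A, THEN iffD1, OF order_refl] by auto
  define F where "F = Z \<circ> inv_into B U"
  have F_image: "F ` (U ` A) = Z ` B"
    unfolding F_def B(3)[symmetric] image_image by (simp add: inv_into_f_f[OF B(2)])
  have "infinite (U ` B)"
    using gamma_U B(3) unfolding gamma_cover_def by simp
  then have "infinite B" by blast
  then have gamma_Z: "gamma_cover X (Z ` B)"
  proof (rule gamma_cover_image)
    show "Z b \<subseteq> topspace X" if "b \<in> B" for b using that B(1) ZU U_sub by blast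
    show "topspace X \<notin> Z ` B"
    proof
      assume "topspace X \<in> Z ` B"
      then obtain b where b: "b \<in> A" "topspace X = Z b" using B(1) by blast
      then have "U b = topspace X" using ZU U_sub by (metis subset_antisym)
      then show False using b(1) not_top by (metis imageI)
    qed
    show "finite {b\<in>B. x \<notin> Z b}" if "x \<in> topspace X" for x
      using cofin[OF that] by (rule rev_finite_subset) (use B(1) in blast)
  qed
  have F_zero: "zero_set X (F V) \<and> F V \<subseteq> V" if "V \<in> U ` A" for V
  proof -
    have "V \<in> U ` B" using that B(3) by simp
    then obtain b where b: "b \<in> B" "V = U b" by blast
    then have "F V = Z b" using B(2) by (simp add: F_def)
    moreover have "b \<in> A" using b(1) B(1) by blast
    ultimately show ?thesis using b(2) zer ZU by simp
  qed
  show ?thesis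
    unfolding Gamma_F_def
  proof (intro CollectI conjI ballI exI)
    show "gamma_cover X (F ` U ` A)" using gamma_Z F_image by simp
  qed (use gamma_U coz F_zero in auto)
qed

definition approx_set :: "'a topology \<Rightarrow> ('a \<Rightarrow> real) \<Rightarrow> real \<Rightarrow> ('a \<Rightarrow> real) \<Rightarrow> 'a set" where
  "approx_set X f r h = {x \<in> topspace X. \<bar>h x - f x\<bar> < r}"

lemma Gamma_f_finite_far:
  assumes A: "A \<in> Gamma_f X f" and x: "x \<in> topspace X" and r: "r > 0"
  shows "finite {h\<in>A. r \<le> \<bar>h x - f x\<bar>}"
proof -
  have "finite (A - Cp_nbhd X f {x} r)" using A x r unfolding Gamma_f_def by auto
  then show ?thesis by (rule rev_finite_subset) (auto simp: Cp_nbhd_def)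
qed

lemma approx_sets_in_Gamma_F:
  assumes A: "A \<in> Gamma_f X f" and f: "f \<in> Cfun X" and r: "r > 0"
    and not_top: "topspace X \<notin> approx_set X f r ` A"
  shows "approx_set X f r ` A \<in> Gamma_F X"
proof (rule Gamma_F_imageI[where Z = "\<lambda>h. {x \<in> topspace X. \<bar>h x - f x\<bar> \<le> r/2}"])
  have dist_cont: "continuous_map X euclideanreal (\<lambda>x. \<bar>h x - f x\<bar>)" if "h \<in> A" for h
    using that A f unfolding Gamma_f_def Cfun_def
    by (intro continuous_map_real_abs continuous_map_diff) auto
  show "infinite A" using A unfolding Gamma_f_def by simp
  show "cozero_set X (approx_set X f r h)" if "h \<in> A" for h
    unfolding approx_set_def by (rule cozero_set_sublevel[OF dist_cont[OF that]])
  show "zero_set X {x \<in> topspace X. \<bar>h x - f x\<bar> \<le> r/2}" if "h \<in> A" for h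
    by (rule zero_set_sublevel[OF dist_cont[OF that]])
  show "{x \<in> topspace X. \<bar>h x - f x\<bar> \<le> r/2} \<subseteq> approx_set X f r h" for h
    using r by (auto simp: approx_set_def)
  show "topspace X \<notin> approx_set X f r ` A" by (rule not_top)
  show "finite {h\<in>A. x \<notin> {x \<in> topspace X. \<bar>h x - f x\<bar> \<le> r/2}}" if x: "x \<in> topspace X" for x
    using Gamma_f_finite_far[OF A x, of "r/2"] r by (rule_tac rev_finite_subset) (auto simp: x)
qed

lemma approx_cover_selection:
  fixes A :: "nat \<Rightarrow> ('a \<Rightarrow> real) set"
  assumes S: "S1 (Gamma_F X) (open_covers X)" and f: "f \<in> Cfun X" and r: "r > 0"
    and A: "\<And>m. A m \<in> Gamma_f X f"
  shows "\<exists>p. (\<forall>m. p m \<in> A m) \<and> (\<forall>x\<in>topspace X. \<exists>m. \<bar>p m x - f x\<bar> < r)"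
proof (cases "\<exists>m. topspace X \<in> approx_set X f r ` A m")
  case True
  then obtain m0 h0 where h0: "h0 \<in> A m0" "approx_set X f r h0 = topspace X"
    by (auto simp: image_iff)
  define p where "p m = (if m = m0 then h0 else SOME h. h \<in> A m)" for m
  have "A m \<noteq> {}" for m using A[of m] unfolding Gamma_f_def by auto
  then have "p m \<in> A m" for m using h0(1) by (simp add: p_def some_in_eq)
  moreover have "\<bar>p m0 x - f x\<bar> < r" if "x \<in> topspace X" for x
    using h0(2) that by (auto simp: p_def approx_set_def)
  ultimately show ?thesis by (intro exI[of _ p]) blast
next
  case False
  then have "approx_set X f r ` A m \<in> Gamma_F X" for m
    by (intro approx_sets_in_Gamma_F[OF A f r]) blast
  then obtain q where q: "\<And>m. q m \<in> approx_set X f r ` A m" and cover: "range q \<in> open_covers X"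
    using S unfolding S1_def by (elim allE[of _ "\<lambda>m. approx_set X f r ` A m"]) blast
  have "\<exists>h. h \<in> A m \<and> approx_set X f r h = q m" for m using q[of m] by blast
  then have "\<forall>m. \<exists>h. h \<in> A m \<and> approx_set X f r h = q m" by blast
  then obtain p where "\<forall>m. p m \<in> A m \<and> approx_set X f r (p m) = q m" by (rule choice[THEN exE])
  then have p: "\<And>m. p m \<in> A m" "\<And>m. approx_set X f r (p m) = q m" by auto
  have "\<exists>m. \<bar>p m x - f x\<bar> < r" if x: "x \<in> topspace X" for x
  proof -
    have "x \<in> \<Union>(range q)" using x cover unfolding open_covers_def is_cover_def by simp
    then obtain m where "x \<in> approx_set X f r (p m)" using p(2) by auto
    then show ?thesis unfolding approx_set_def by blast
  qed
  with p(1) show ?thesis by (intro exI[of _ p]) blast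
qed

lemma S1_Gamma_F_imp_S1_Gamma_f_B_f:
  assumes S: "S1 (Gamma_F X) (open_covers X)" and f: "f \<in> Cfun X"
  shows "S1 (Gamma_f X f) (B_f X f)"
  unfolding S1_def
proof (intro allI impI)
  fix A :: "nat \<Rightarrow> ('a \<Rightarrow> real) set"
  assume A: "\<forall>n. A n \<in> Gamma_f X f"
  have "\<forall>k. \<exists>q. (\<forall>m. q m \<in> A (prod_encode (k, m))) \<and>
      (\<forall>x\<in>topspace X. \<exists>m. \<bar>q m x - f x\<bar> < inverse (real (Suc k)))"
  proof
    fix k
    show "\<exists>q. (\<forall>m. q m \<in> A (prod_encode (k, m))) \<and>
      (\<forall>x\<in>topspace X. \<exists>m. \<bar>q m x - f x\<bar> < inverse (real (Suc k)))"
      by (rule approx_cover_selection[OF S f]) (use A in auto)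
  qed
  then obtain q where "\<forall>k. (\<forall>m. q k m \<in> A (prod_encode (k, m))) \<and>
      (\<forall>x\<in>topspace X. \<exists>m. \<bar>q k m x - f x\<bar> < inverse (real (Suc k)))"
    by (rule choice[THEN exE])
  then have q: "\<And>k m. q k m \<in> A (prod_encode (k, m))"
    and q_cover: "\<And>k x. x \<in> topspace X \<Longrightarrow> \<exists>m. \<bar>q k m x - f x\<bar> < inverse (real (Suc k))"
    by auto
  define p where "p n = (case prod_decode n of (k, m) \<Rightarrow> q k m)" for n
  have p_in: "p n \<in> A n" for n
    using q[of "fst (prod_decode n)" "snd (prod_decode n)"]
    by (simp add: p_def case_prod_beta)
  have "range p \<in> B_f X f"
    unfolding B_f_def
  proof (intro CollectI conjI ballI allI impI)
    show "range p \<subseteq> Cfun X" using p_in A unfolding Gamma_f_def by blast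
    fix x and e :: real assume x: "x \<in> topspace X" and e: "e > 0"
    obtain k where k: "inverse (real (Suc k)) < e" using reals_Archimedean[OF e] by blast
    obtain m where "\<bar>q k m x - f x\<bar> < inverse (real (Suc k))" using q_cover[OF x] by blast
    then have "\<bar>p (prod_encode (k, m)) x - f x\<bar> < e" using k by (simp add: p_def)
    then show "\<exists>h\<in>range p. \<bar>h x - f x\<bar> < e" by blast
  qed
  with p_in show "\<exists>p. (\<forall>n. p n \<in> A n) \<and> range p \<in> B_f X f" by blast
qed

lemma zero_cozero_separation:
  assumes Z: "zero_set X Z" and U: "cozero_set X U" and ZU: "Z \<subseteq> U"
  obtains h where "h \<in> Cfun X" "\<And>x. x \<in> Z \<Longrightarrow> h x = 0"
    "\<And>x. x \<in> topspace X \<Longrightarrow> h x = 1 \<longleftrightarrow> x \<notin> U"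
proof -
  obtain g1 where g1: "continuous_map X euclideanreal g1" "Z = {x \<in> topspace X. g1 x = 0}"
    using Z unfolding zero_set_def by blast
  obtain g2 where g2: "continuous_map X euclideanreal g2" "U = {x \<in> topspace X. g2 x \<noteq> 0}"
    using U unfolding cozero_set_def by blast
  have den: "\<bar>g1 x\<bar> + \<bar>g2 x\<bar> \<noteq> 0" if "x \<in> topspace X" for x
    using that g1(2) g2(2) ZU by auto
  define h where "h x = (if x \<in> topspace X then \<bar>g1 x\<bar> / (\<bar>g1 x\<bar> + \<bar>g2 x\<bar>) else 0)" for x
  have "continuous_map X euclideanreal (\<lambda>x. \<bar>g1 x\<bar> / (\<bar>g1 x\<bar> + \<bar>g2 x\<bar>))"
    using g1(1) g2(1) den
    by (intro continuous_map_real_divide continuous_map_add continuous_map_real_abs) auto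
  then have "continuous_map X euclideanreal h"
    by (rule continuous_map_eq) (simp add: h_def)
  then have "h \<in> Cfun X" by (simp add: Cfun_def h_def)
  moreover have "h x = 0" if "x \<in> Z" for x using that g1(2) by (simp add: h_def)
  moreover have "h x = 1 \<longleftrightarrow> x \<notin> U" if x: "x \<in> topspace X" for x
  proof -
    have "h x = 1 \<longleftrightarrow> \<bar>g1 x\<bar> = \<bar>g1 x\<bar> + \<bar>g2 x\<bar>"
      using x den[OF x] by (simp add: h_def divide_eq_1_iff)
    also have "\<dots> \<longleftrightarrow> x \<notin> U" using x g2(2) by auto
    finally show ?thesis .
  qed
  ultimately show ?thesis by (rule that)
qed

lemma zero_cozero_separating_family:
  assumes "\<And>V. V \<in> \<U> \<Longrightarrow> zero_set X (F V) \<and> F V \<subseteq> V" "\<And>V. V \<in> \<U> \<Longrightarrow> cozero_set X V"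
  obtains h where "\<And>V. V \<in> \<U> \<Longrightarrow> h V \<in> Cfun X"
    "\<And>V x. V \<in> \<U> \<Longrightarrow> x \<in> F V \<Longrightarrow> h V x = 0"
    "\<And>V x. V \<in> \<U> \<Longrightarrow> x \<in> topspace X \<Longrightarrow> h V x = 1 \<longleftrightarrow> x \<notin> V"
proof -
  have "\<forall>V\<in>\<U>. \<exists>h. h \<in> Cfun X \<and> (\<forall>x\<in>F V. h x = 0) \<and> (\<forall>x\<in>topspace X. h x = 1 \<longleftrightarrow> x \<notin> V)"
  proof
    fix V assume V: "V \<in> \<U>"
    obtain h where "h \<in> Cfun X" "\<And>x. x \<in> F V \<Longrightarrow> h x = 0"
      "\<And>x. x \<in> topspace X \<Longrightarrow> h x = 1 \<longleftrightarrow> x \<notin> V"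
      using zero_cozero_separation[of X "F V" V] assms[OF V] by blast
    then show "\<exists>h. h \<in> Cfun X \<and> (\<forall>x\<in>F V. h x = 0) \<and> (\<forall>x\<in>topspace X. h x = 1 \<longleftrightarrow> x \<notin> V)"
      by blast
  qed
  then obtain h where "\<forall>V\<in>\<U>. h V \<in> Cfun X \<and> (\<forall>x\<in>F V. h V x = 0) \<and> (\<forall>x\<in>topspace X. h V x = 1 \<longleftrightarrow> x \<notin> V)"
    by (rule bchoice[THEN exE])
  then show ?thesis by (intro that[of h]) auto
qed

lemma Gamma_f_imageI:
  fixes X :: "'a topology"
  assumes inf: "infinite I" and inj: "inj_on h I" and C: "\<And>i. i \<in> I \<Longrightarrow> h i \<in> Cfun X"
    and f: "f \<notin> h ` I"
    and cofin: "\<And>x. x \<in> topspace X \<Longrightarrow> finite {i\<in>I. h i x \<noteq> f x}"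
  shows "h ` I \<in> Gamma_f X f"
  unfolding Gamma_f_def
proof (intro CollectI conjI allI impI)
  show "h ` I \<subseteq> Cfun X" using C by blast
  show "infinite (h ` I)" using inf inj by (simp add: finite_image_iff)
  show "f \<notin> h ` I" by (rule f)
  fix S :: "'a set" and e :: real
  assume S: "finite S \<and> S \<subseteq> topspace X \<and> e > 0"
  have "h ` I - Cp_nbhd X f S e \<subseteq> h ` (\<Union>x\<in>S. {i\<in>I. h i x \<noteq> f x})"
    using S C by (force simp: Cp_nbhd_def)
  moreover have "finite (\<Union>x\<in>S. {i\<in>I. h i x \<noteq> f x})" using S cofin by blast
  ultimately show "finite (h ` I - Cp_nbhd X f S e)" by (meson finite_imageI finite_subset)
qed

lemma Gamma_F_refined_by_Gamma_f:
  assumes U: "\<U> \<in> Gamma_F X"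
  shows "\<exists>A\<in>Gamma_f X (\<lambda>x. 0). \<forall>h\<in>A. \<exists>V\<in>\<U>. {x \<in> topspace X. \<bar>h x\<bar> < 1} \<subseteq> V"
proof -
  obtain F where F: "\<And>V. V \<in> \<U> \<Longrightarrow> zero_set X (F V) \<and> F V \<subseteq> V"
    and gamma_F: "gamma_cover X (F ` \<U>)"
    using U unfolding Gamma_F_def by blast
  have gamma_U: "gamma_cover X \<U>" and coz: "\<And>V. V \<in> \<U> \<Longrightarrow> cozero_set X V"
    using U unfolding Gamma_F_def by auto
  \<comment> \<open>Distinct members of \<open>\<U>\<close> may share \<open>F U\<close>; keeping one per zero-set makes each point
    lie outside only finitely many \<open>F V\<close>, \<open>V \<in> \<V>\<close>.\<close>
  obtain \<V> where \<V>: "\<V> \<subseteq> \<U>" "inj_on F \<V>" "F ` \<U> = F ` \<V>"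
    using subset_image_inj[of "F ` \<U>" F \<U>, THEN iffD1, OF order_refl] by auto
  obtain h where hC: "\<And>V. V \<in> \<U> \<Longrightarrow> h V \<in> Cfun X"
    and h0: "\<And>V x. V \<in> \<U> \<Longrightarrow> x \<in> F V \<Longrightarrow> h V x = 0"
    and h1: "\<And>V x. V \<in> \<U> \<Longrightarrow> x \<in> topspace X \<Longrightarrow> h V x = 1 \<longleftrightarrow> x \<notin> V"
    using zero_cozero_separating_family[of \<U> X F] F coz by blast
  have V_sub: "V \<subseteq> topspace X" if "V \<in> \<U>" for V
    using coz[OF that] by (rule cozero_set_subset_topspace)
  have "h ` \<V> \<in> Gamma_f X (\<lambda>x. 0)"
  proof (rule Gamma_f_imageI)
    show "infinite \<V>" using gamma_F \<V>(3) unfolding gamma_cover_def by auto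
    show "inj_on h \<V>"
    proof (rule inj_onI)
      fix V V' assume V: "V \<in> \<V>" "V' \<in> \<V>" "h V = h V'"
      then have "x \<in> V \<longleftrightarrow> x \<in> V'" if "x \<in> topspace X" for x
        using h1[OF _ that, of V] h1[OF _ that, of V'] \<V>(1) by auto
      then show "V = V'" using V_sub V(1,2) \<V>(1) by blast
    qed
    show "h V \<in> Cfun X" if "V \<in> \<V>" for V using that \<V>(1) hC by blast
    show "(\<lambda>x. 0) \<notin> h ` \<V>"
    proof
      assume "(\<lambda>x. 0) \<in> h ` \<V>"
      then obtain V where V: "V \<in> \<V>" "h V = (\<lambda>x. 0)" by (metis imageE)
      have "V \<in> \<U>" using V(1) \<V>(1) by blast
      have "V \<noteq> topspace X" using \<open>V \<in> \<U>\<close> gamma_U unfolding gamma_cover_def is_cover_def by auto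
      then obtain x where "x \<in> topspace X" "x \<notin> V" using V_sub[OF \<open>V \<in> \<U>\<close>] by blast
      then show False using h1[OF \<open>V \<in> \<U>\<close>] V(2) by simp
    qed
    show "finite {V\<in>\<V>. h V x \<noteq> 0}" if x: "x \<in> topspace X" for x
    proof -
      have "finite {W \<in> F ` \<U>. x \<notin> W}" using gamma_F x unfolding gamma_cover_def by simp
      then have "finite (F -` {W \<in> F ` \<U>. x \<notin> W} \<inter> \<V>)" using \<V>(2) by (rule finite_vimage_IntI)
      moreover have "{V\<in>\<V>. x \<notin> F V} \<subseteq> F -` {W \<in> F ` \<U>. x \<notin> W} \<inter> \<V>" by (auto simp: \<V>(3))
      ultimately have "finite {V\<in>\<V>. x \<notin> F V}" by (rule finite_subset[rotated])
      then show ?thesis by (rule rev_finite_subset) (use h0 \<V>(1) in blast)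
    qed
  qed
  moreover have "\<exists>V\<in>\<U>. {x \<in> topspace X. \<bar>k x\<bar> < 1} \<subseteq> V" if k: "k \<in> h ` \<V>" for k
  proof -
    obtain V where V: "V \<in> \<U>" "k = h V" using k \<V>(1) by blast
    then have "{x \<in> topspace X. \<bar>k x\<bar> < 1} \<subseteq> V" using h1[OF V(1)] by force
    with V(1) show ?thesis by blast
  qed
  ultimately show ?thesis by blast
qed

lemma range_in_open_covers:
  assumes "\<And>n. openin X (V n)" "\<And>n. V n \<noteq> topspace X" "topspace X \<subseteq> (\<Union>n. V n)"
  shows "range V \<in> open_covers X"
  using assms openin_subset unfolding open_covers_def is_cover_def by fastforce

lemma S1_Gamma_f_B_f_imp_S1_Gamma_F:
  assumes S: "S1 (Gamma_f X (\<lambda>x. 0)) (B_f X (\<lambda>x. 0))"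
  shows "S1 (Gamma_F X) (open_covers X)"
  unfolding S1_def
proof (intro allI impI)
  fix P :: "nat \<Rightarrow> 'a set set"
  assume P: "\<forall>n. P n \<in> Gamma_F X"
  have "\<forall>n. \<exists>A\<in>Gamma_f X (\<lambda>x. 0). \<forall>h\<in>A. \<exists>V\<in>P n. {x \<in> topspace X. \<bar>h x\<bar> < 1} \<subseteq> V"
    using P Gamma_F_refined_by_Gamma_f by blast
  then obtain A where A: "\<And>n. A n \<in> Gamma_f X (\<lambda>x. 0)"
    and A_refines: "\<And>n h. h \<in> A n \<Longrightarrow> \<exists>V\<in>P n. {x \<in> topspace X. \<bar>h x\<bar> < 1} \<subseteq> V"
    by metis
  obtain p where p: "\<And>n. p n \<in> A n" and p_B: "range p \<in> B_f X (\<lambda>x. 0)"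
    using S A unfolding S1_def by blast
  obtain V where V: "\<And>n. V n \<in> P n" and V_sub: "\<And>n. {x \<in> topspace X. \<bar>p n x\<bar> < 1} \<subseteq> V n"
    using A_refines[OF p] by metis
  have "range V \<in> open_covers X"
  proof (rule range_in_open_covers)
    show "openin X (V n)" for n
      using V[of n] P by (auto simp: Gamma_F_def intro: openin_cozero_set)
    show "V n \<noteq> topspace X" for n
      using V[of n] P by (auto simp: Gamma_F_def gamma_cover_def is_cover_def)
    show "topspace X \<subseteq> (\<Union>n. V n)"
    proof
      fix x assume "x \<in> topspace X"
      then obtain n where "\<bar>p n x\<bar> < 1" using p_B unfolding B_f_def by fastforce
      then show "x \<in> (\<Union>n. V n)" using V_sub \<open>x \<in> topspace X\<close> by blast
    qed
  qed
  with V show "\<exists>V. (\<forall>n. V n \<in> P n) \<and> range V \<in> open_covers X" by blast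
qed

theorem mainTheorem19:
  fixes X :: "'a topology"
  assumes "tychonoff_space X"
  shows "(\<forall>f\<in>Cfun X. S1 (Gamma_f X f) (B_f X f)) \<longleftrightarrow> S1 (Gamma_F X) (open_covers X)"
proof
  assume "\<forall>f\<in>Cfun X. S1 (Gamma_f X f) (B_f X f)"
  moreover have "(\<lambda>x. 0) \<in> Cfun X" by (simp add: Cfun_def)
  ultimately show "S1 (Gamma_F X) (open_covers X)" by (blast intro: S1_Gamma_f_B_f_imp_S1_Gamma_F)
next
  assume "S1 (Gamma_F X) (open_covers X)"
  then show "\<forall>f\<in>Cfun X. S1 (Gamma_f X f) (B_f X f)" by (blast intro: S1_Gamma_F_imp_S1_Gamma_f_B_f)
qed

end
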